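(* Assume (A1) and fix all parameters except $\omega$. (i) As a function of $\omega\in[0,1]$, $P^*(\omega)$ is either strictly increasing on $[0,1]$, or strictly decreasing on $[0,1]$, or there exists $\omega_{P^*}\in(0,1)$ such that $P^*$ is strictly decreasing on $[0,\omega_{P^*})$ and strictly increasing on $(\omega_{P^*},1]$. As a function of $\omega\in[0,1]$, $Y^*(\omega)$ is either strictly increasing on $[0,1]$, or there exists $\omega_{Y^*}\in(0,1)$ such that $Y^*$ is strictly increasing on $[0,\omega_{Y^*})$ and strictly decreasing on $(\omega_{Y^*},1]$. (ii) Assume moreover $1/\sqrt{2\beta}<b<\min\{dA/(1-c),F^*\}$ and $$P^L(\omega)\ne P^*(\omega)-\frac{1-c}{1-c-\omega^2dh}\sqrt{b^2-\frac{1}{2\beta}}\quad\text{for all }\omega\in(0,1).$$ Then for each $j\in\{L,H\}$: on $(0,1)$, $P^j$ is either strictly increasing, or strictly decreasing, or there exists $\omega_{P^j}\in(0,1)$ such that $P^j$ is strictly decreasing on $(0,\omega_{P^j})$ and strictly increasing on $(\omega_{P^j},1)$; and $Y^j$ is either strictly increasing on $(0,1)$, or there exists $\omega_{Y^j}\in(0,1)$ such that $Y^j$ is strictly increasing on $(0,\omega_{Y^j})$ and strictly decreasing on $(\omega_{Y^j},1)$.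
   Context: Let $g_I,g_P:\mathbb{R}\to\mathbb{R}$ be continuously differentiable functions, each satisfying: $g(0)=0$ and $g$ strictly increasing; $g$ convex on $(-\infty,0]$ and concave on $[0,+\infty)$, with maximal slope attained at $0$ and $g'(0)=1$; $g$ bounded above and below. Parameters: $A>0$, $c\in(0,1)$, $\gamma>0$, $\omega\in[0,1]$, $h>0$, $d>0$, $\sigma>0$, $\mu>0$, $F^*>0$, $b>0$, $\beta>0$. Let $G=(G_1,G_2,G_3):\mathbb{R}^3\to\mathbb{R}^3$ be defined by $G_1(Y,P,Z)=A+cY+\gamma g_I(Y-Z)+\omega hP$, $G_2(Y,P,Z)=P+\sigma g_P\big(\mu\big((1-\omega)F^*+\omega dY-P+b(2\alpha(Y,P)-1)\big)\big)$, $G_3(Y,P,Z)=Y$, where $\alpha(Y,P)=\dfrac{1}{1+e^{-4b\beta(P-(1-\omega)F^*-\omega dY)}}$. A steady state is a fixed point of $G$. Assumption (A1): $1-c-hd>0$. The steady state $S^*=(Y^*,P^*,Y^* )$ has $Y^*(\omega)=\frac{A+\omega(1-\omega)hF^*}{1-c-\omega^2dh}$, $P^*(\omega)=\frac{(1-\omega)(1-c)F^*+\omega dA}{1-c-\omega^2dh}$. When $b>1/\sqrt{2\beta}$, $G$ has exactly three steady states for each $\omega$, and $S^L(\omega)=(Y^L,P^L,Y^L)$, $S^H(\omega)=(Y^H,P^H,Y^H)$ denote the two with $P^L<P^*<P^H$. *)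

theory Defs
  imports "HOL-Analysis.Analysis"
begin

definition admissible_g :: "(real \<Rightarrow> real) \<Rightarrow> bool" where
  "admissible_g g \<longleftrightarrow>
     (\<forall>x. g differentiable at x) \<and> continuous_on UNIV (deriv g) \<and>
     g 0 = 0 \<and> strict_mono g \<and>
     convex_on {..0} g \<and> concave_on {0..} g \<and>
     (\<forall>x. deriv g x \<le> deriv g 0) \<and> deriv g 0 = 1 \<and>
     bdd_above (range g) \<and> bdd_below (range g)"

definition alpha_fn :: "real \<Rightarrow> real \<Rightarrow> real \<Rightarrow> real \<Rightarrow> real \<Rightarrow> real \<Rightarrow> real \<Rightarrow> real" where
  "alpha_fn b \<beta> \<omega> Fs d Y P = 1 / (1 + exp (- 4 * b * \<beta> * (P - (1 - \<omega>) * Fs - \<omega> * d * Y)))"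

definition G_map ::
  "(real \<Rightarrow> real) \<Rightarrow> (real \<Rightarrow> real) \<Rightarrow> real \<Rightarrow> real \<Rightarrow> real \<Rightarrow> real \<Rightarrow> real \<Rightarrow> real \<Rightarrow>
   real \<Rightarrow> real \<Rightarrow> real \<Rightarrow> real \<Rightarrow> real \<Rightarrow> real \<times> real \<times> real \<Rightarrow> real \<times> real \<times> real" where
  "G_map gI gP A c \<gamma> \<omega> h d \<sigma> \<mu> Fs b \<beta> = (\<lambda>(Y, P, Z).
     (A + c * Y + \<gamma> * gI (Y - Z) + \<omega> * h * P,
      P + \<sigma> * gP (\<mu> * ((1 - \<omega>) * Fs + \<omega> * d * Y - P + b * (2 * alpha_fn b \<beta> \<omega> Fs d Y P - 1))),
      Y))"

definition Ystar :: "real \<Rightarrow> real \<Rightarrow> real \<Rightarrow> real \<Rightarrow> real \<Rightarrow> real \<Rightarrow> real" where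
  "Ystar A c h d Fs \<omega> = (A + \<omega> * (1 - \<omega>) * h * Fs) / (1 - c - \<omega>\<^sup>2 * d * h)"

definition Pstar :: "real \<Rightarrow> real \<Rightarrow> real \<Rightarrow> real \<Rightarrow> real \<Rightarrow> real \<Rightarrow> real" where
  "Pstar A c h d Fs \<omega> = ((1 - \<omega>) * (1 - c) * Fs + \<omega> * d * A) / (1 - c - \<omega>\<^sup>2 * d * h)"

end

theory Submission
  imports Defs
begin

text \<open>A steady state with \<open>Y = Z\<close> is determined by its deviation
\<open>x = P - (1 - \<omega>) F\<^sup>* - \<omega> d Y\<close>, which must solve \<open>x = b tanh (2 b \<beta> x)\<close>. This equation does
not involve \<open>\<omega>\<close> and has at most one root of each sign, so along a branch of steady states
lying on one side of \<open>S\<^sup>*\<close> the deviation is a constant \<open>x\<close>, and \<open>P\<^sup>j, Y\<^sup>j\<close> are the rational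
functions of \<open>\<omega>\<close> obtained from \<open>P\<^sup>*, Y\<^sup>*\<close> by shifting their numerators by multiples of \<open>x\<close>;
moreover \<open>|x| < b\<close>. The shape of such a function on \<open>[0,1]\<close> is governed by the sign of
the quadratic numerator of its derivative: for \<open>P\<close> this quadratic is strictly increasing
on \<open>[0,1]\<close>, for \<open>Y\<close> it is positive at \<open>0\<close> and either nonnegative with at most one zero or
strictly decreasing.\<close>

lemma strict_antimono_on_uminus_iff:
  fixes f :: "'a::order \<Rightarrow> 'b::ordered_ab_group_add"
  shows "strict_antimono_on S (\<lambda>x. - f x) \<longleftrightarrow> strict_mono_on S f"
  by (auto simp: monotone_on_def)

lemma monotone_on_eq_on_subset:
  assumes "monotone_on S R R' g" "T \<subseteq> S" "\<And>x. x \<in> T \<Longrightarrow> f x = g x"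
  shows "monotone_on T R R' f"
  using assms by (auto simp: monotone_on_def)

lemma strict_mono_on_if_deriv_pos_except:
  fixes f f' :: "real \<Rightarrow> real"
  assumes S: "is_interval S"
    and der: "\<And>z. z \<in> S \<Longrightarrow> (f has_real_derivative f' z) (at z)"
    and pos: "\<And>z. z \<in> S \<Longrightarrow> z \<noteq> t \<Longrightarrow> f' z > 0"
  shows "strict_mono_on S f"
proof (rule strict_mono_onI)
  have less: "f x < f y" if xy: "x \<in> S" "y \<in> S" "x < y" and t: "t \<notin> {x<..<y}" for x y
  proof (rule DERIV_pos_imp_increasing_open[OF \<open>x < y\<close>])
    have sub: "{x..y} \<subseteq> S"
      by (auto intro: mem_is_interval_1_I[OF S xy(1,2)])
    show "\<exists>l. (f has_real_derivative l) (at z) \<and> l > 0" if "x < z" "z < y" for z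
    proof -
      have "z \<in> S" "z \<noteq> t"
        using sub t that by auto
      then show ?thesis
        using der pos by blast
    qed
    show "continuous_on {x..y} f"
      by (rule continuous_at_imp_continuous_on) (use der sub in \<open>blast intro: DERIV_isCont\<close>)
  qed
  fix x y assume xy: "x \<in> S" "y \<in> S" "x < y"
  show "f x < f y"
  proof (cases "t \<in> {x<..<y}")
    case True
    then have "t \<in> S"
      by (auto intro: mem_is_interval_1_I[OF S xy(1,2)])
    have "f x < f t"
      using xy True \<open>t \<in> S\<close> by (intro less) auto
    also have "f t < f y"
      using xy True \<open>t \<in> S\<close> by (intro less) auto
    finally show ?thesis .
  next
    case False
    with xy show ?thesis
      by (intro less) auto
  qed
qed

lemma strict_antimono_on_if_deriv_neg_except:
  fixes f f' :: "real \<Rightarrow> real"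
  assumes "is_interval S"
    and der: "\<And>z. z \<in> S \<Longrightarrow> (f has_real_derivative f' z) (at z)"
    and "\<And>z. z \<in> S \<Longrightarrow> z \<noteq> t \<Longrightarrow> f' z < 0"
  shows "strict_antimono_on S f"
proof -
  have "strict_mono_on S (\<lambda>x. - f x)"
    by (rule strict_mono_on_if_deriv_pos_except[where f'="\<lambda>z. - f' z" and t=t])
       (use assms in \<open>auto intro: DERIV_minus\<close>)
  then show ?thesis
    using strict_antimono_on_uminus_iff[of S "\<lambda>x. - f x"] by simp
qed

text \<open>Only the sign of the derivative matters, so it is given as a quotient \<open>s / r\<close> with \<open>r > 0\<close>.\<close>

lemma antimono_or_valley_if_deriv_sign_strict_mono:
  fixes f s r :: "real \<Rightarrow> real"
  assumes "a \<le> b"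
    and der: "\<And>z. z \<in> {a..b} \<Longrightarrow> (f has_real_derivative s z / r z) (at z)"
    and r: "\<And>z. z \<in> {a..b} \<Longrightarrow> r z > 0"
    and s_cont: "continuous_on {a..b} s" and s_mono: "strict_mono_on {a..b} s"
    and sa: "s a < 0"
  shows "strict_antimono_on {a..b} f \<or>
    (\<exists>w\<in>{a<..<b}. strict_antimono_on {a..<w} f \<and> strict_mono_on {w<..b} f)"
proof -
  have neg: "s z / r z < 0" if "z \<in> {a..b}" "s z < 0" for z
    using that r by (simp add: divide_neg_pos)
  have pos: "s z / r z > 0" if "z \<in> {a..b}" "s z > 0" for z
    using that r by simp
  show ?thesis
  proof (cases "s b \<le> 0")
    case True
    have "s z < 0" if "z \<in> {a..b}" "z \<noteq> b" for z
      using strict_mono_onD[OF s_mono, of z b] that True by auto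
    then have "strict_antimono_on {a..b} f"
      by (intro strict_antimono_on_if_deriv_neg_except[OF _ der, where t=b]) (auto intro: neg)
    then show ?thesis ..
  next
    case False
    then obtain w where w: "a \<le> w" "w \<le> b" "s w = 0"
      using IVT'[of s a 0 b] sa s_cont \<open>a \<le> b\<close> by auto
    have w_in: "w \<in> {a<..<b}"
      using w sa False by (cases "w = a"; cases "w = b") auto
    have "s z < 0" if "z \<in> {a..<w}" for z
      using strict_mono_onD[OF s_mono, of z w] that w by auto
    then have "strict_antimono_on {a..<w} f"
      using w by (intro strict_antimono_on_if_deriv_neg_except[where f'="\<lambda>z. s z / r z" and t=w])
        (auto intro: der neg)
    moreover have "s z > 0" if "z \<in> {w<..b}" for z
      using strict_mono_onD[OF s_mono, of w z] that w by auto
    then have "strict_mono_on {w<..b} f"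
      using w by (intro strict_mono_on_if_deriv_pos_except[where f'="\<lambda>z. s z / r z" and t=w])
        (auto intro: der pos)
    ultimately show ?thesis
      using w_in by blast
  qed
qed

lemma mono_or_hump_if_deriv_sign_strict_antimono:
  fixes f s r :: "real \<Rightarrow> real"
  assumes "a \<le> b"
    and der: "\<And>z. z \<in> {a..b} \<Longrightarrow> (f has_real_derivative s z / r z) (at z)"
    and r: "\<And>z. z \<in> {a..b} \<Longrightarrow> r z > 0"
    and s_cont: "continuous_on {a..b} s" and s_anti: "strict_antimono_on {a..b} s"
    and sa: "s a > 0"
  shows "strict_mono_on {a..b} f \<or>
    (\<exists>w\<in>{a<..<b}. strict_mono_on {a..<w} f \<and> strict_antimono_on {w<..b} f)"
proof -
  have "strict_antimono_on {a..b} (\<lambda>x. - f x) \<or>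
    (\<exists>w\<in>{a<..<b}. strict_antimono_on {a..<w} (\<lambda>x. - f x) \<and> strict_mono_on {w<..b} (\<lambda>x. - f x))"
  proof (rule antimono_or_valley_if_deriv_sign_strict_mono[where s="\<lambda>z. - s z" and r=r])
    show "((\<lambda>x. - f x) has_real_derivative - s z / r z) (at z)" if "z \<in> {a..b}" for z
      using DERIV_minus[OF der[OF that]] by simp
    show "strict_mono_on {a..b} (\<lambda>z. - s z)"
      using s_anti strict_antimono_on_uminus_iff[of _ "\<lambda>z. - s z"] by simp
  qed (use \<open>a \<le> b\<close> r s_cont sa in \<open>auto intro: continuous_intros\<close>)
  then show ?thesis
    using strict_antimono_on_uminus_iff[of _ f]
      strict_antimono_on_uminus_iff[of _ "\<lambda>x. - f x"] by simp
qed

text \<open>Steady states as functions of \<open>\<omega>\<close>, parametrised by their deviation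
\<open>x = P - (1 - \<omega>) F\<^sup>* - \<omega> d Y\<close>.\<close>

definition P_branch :: "real \<Rightarrow> real \<Rightarrow> real \<Rightarrow> real \<Rightarrow> real \<Rightarrow> real \<Rightarrow> real \<Rightarrow> real" where
  "P_branch A c h d Fs x w =
     ((1 - w) * (1 - c) * Fs + w * d * A + (1 - c) * x) / (1 - c - w\<^sup>2 * d * h)"

definition Y_branch :: "real \<Rightarrow> real \<Rightarrow> real \<Rightarrow> real \<Rightarrow> real \<Rightarrow> real \<Rightarrow> real \<Rightarrow> real" where
  "Y_branch A c h d Fs x w = (A + h * w * (Fs + x) - h * Fs * w\<^sup>2) / (1 - c - w\<^sup>2 * d * h)"

lemma Pstar_eq_P_branch: "Pstar A c h d Fs = P_branch A c h d Fs 0"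
  by (simp add: fun_eq_iff Pstar_def P_branch_def)

lemma Ystar_eq_Y_branch: "Ystar A c h d Fs = Y_branch A c h d Fs 0"
  by (simp add: fun_eq_iff Ystar_def Y_branch_def algebra_simps power2_eq_square)

lemma P_branch_minus_Pstar:
  "P_branch A c h d Fs x w - Pstar A c h d Fs w = (1 - c) * x / (1 - c - w\<^sup>2 * d * h)"
  by (simp add: Pstar_def P_branch_def flip: diff_divide_distrib)

lemma steady_denominator_pos:
  fixes c d h w :: real
  assumes A1: "1 - c - h * d > 0" and "d > 0" "h > 0" and w: "w \<in> {0..1}"
  shows "1 - c - w\<^sup>2 * d * h > 0"
proof -
  have "w\<^sup>2 * (d * h) \<le> 1 * (d * h)"
    using assms by (intro mult_right_mono) (auto simp: power_le_one)
  with A1 show ?thesis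
    by (simp add: algebra_simps)
qed

lemma P_branch_deriv:
  assumes "1 - c - w\<^sup>2 * d * h \<noteq> 0"
  shows "(P_branch A c h d Fs x has_real_derivative
      ((d * A - (1 - c) * Fs) * d * h * w\<^sup>2 + 2 * d * h * ((1 - c) * (Fs + x)) * w
        + (d * A - (1 - c) * Fs) * (1 - c)) / (1 - c - w\<^sup>2 * d * h)\<^sup>2) (at w)"
  unfolding P_branch_def[abs_def]
  using assms by (auto intro!: derivative_eq_intros simp: field_simps power2_eq_square)

lemma Y_branch_deriv:
  assumes "1 - c - w\<^sup>2 * d * h \<noteq> 0" "h \<noteq> 0"
  shows "(Y_branch A c h d Fs x has_real_derivative
      (d * h * (Fs + x) * w\<^sup>2 + 2 * (d * A - (1 - c) * Fs) * w + (1 - c) * (Fs + x))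
        / ((1 - c - w\<^sup>2 * d * h)\<^sup>2 / h)) (at w)"
  unfolding Y_branch_def[abs_def]
  using assms by (auto intro!: derivative_eq_intros simp: field_simps power2_eq_square)

lemma P_branch_shape:
  assumes h: "h > 0" and d: "d > 0" and A1: "1 - c - h * d > 0"
    and Fx: "Fs + x > 0" and Ax: "d * A + (1 - c) * x > 0"
  shows "strict_mono_on {0..1} (P_branch A c h d Fs x) \<or>
    strict_antimono_on {0..1} (P_branch A c h d Fs x) \<or>
    (\<exists>w\<in>{0<..<1}. strict_antimono_on {0..<w} (P_branch A c h d Fs x) \<and>
                   strict_mono_on {w<..1} (P_branch A c h d Fs x))"
proof -
  define k where "k = d * A - (1 - c) * Fs"
  define a where "a = (1 - c) * (Fs + x)"
  define s where "s w = k * d * h * w\<^sup>2 + 2 * d * h * a * w + k * (1 - c)" for w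
  have "1 - c > 0"
    using A1 mult_pos_pos[OF h d] by linarith
  with Fx Ax have a: "a > 0" "a + k > 0"
    unfolding a_def k_def by (simp, simp add: ring_distribs)
  have der: "(P_branch A c h d Fs x has_real_derivative s z / (1 - c - z\<^sup>2 * d * h)\<^sup>2) (at z)"
    if "z \<in> {0..1}" for z
    unfolding s_def k_def a_def
    using steady_denominator_pos[OF A1 d h that] by (intro P_branch_deriv) auto
  have r: "(1 - c - z\<^sup>2 * d * h)\<^sup>2 > 0" if "z \<in> {0..1}" for z
    using steady_denominator_pos[OF A1 d h that] by simp
  \<comment> \<open>\<open>s v - s u\<close> has the factor \<open>k (u + v) + 2 a\<close>, affine in \<open>u + v \<in> [0, 2]\<close> and positive at both ends\<close>
  have s_mono: "strict_mono_on {0..1} s"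
  proof (rule strict_mono_onI)
    fix u v :: real assume uv: "u \<in> {0..1}" "v \<in> {0..1}" "u < v"
    have "k * (u + v) + 2 * a > 0"
    proof (cases "k \<ge> 0")
      case True
      with uv have "k * (u + v) \<ge> 0"
        by simp
      with a show ?thesis
        by linarith
    next
      case False
      with uv have "k * (u + v) \<ge> k * 2"
        by (intro mult_left_mono_neg) auto
      with a show ?thesis
        by linarith
    qed
    then have "(v - u) * (d * h * (k * (u + v) + 2 * a)) > 0"
      using uv d h by simp
    moreover have "s v - s u = (v - u) * (d * h * (k * (u + v) + 2 * a))"
      by (simp add: s_def algebra_simps power2_eq_square)
    ultimately show "s u < s v"
      by linarith
  qed
  have s_cont: "continuous_on {0..1} s"
    by (auto simp: s_def intro!: continuous_intros)
  show ?thesis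
  proof (cases "s 0 \<ge> 0")
    case True
    have "s z / (1 - c - z\<^sup>2 * d * h)\<^sup>2 > 0" if "z \<in> {0..1}" "z \<noteq> 0" for z
    proof (rule divide_pos_pos)
      show "s z > 0"
        using strict_mono_onD[OF s_mono, of 0 z] True that by auto
    qed (rule r[OF that(1)])
    then have "strict_mono_on {0..1} (P_branch A c h d Fs x)"
      by (intro strict_mono_on_if_deriv_pos_except[OF _ der, where t=0]) auto
    then show ?thesis ..
  next
    case False
    then show ?thesis
      using antimono_or_valley_if_deriv_sign_strict_mono[OF zero_le_one der r s_cont s_mono] by auto
  qed
qed

lemma Y_branch_shape:
  assumes h: "h > 0" and d: "d > 0" and A1: "1 - c - h * d > 0" and Fx: "Fs + x > 0"
  shows "strict_mono_on {0..1} (Y_branch A c h d Fs x) \<or>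
    (\<exists>w\<in>{0<..<1}. strict_mono_on {0..<w} (Y_branch A c h d Fs x) \<and>
                   strict_antimono_on {w<..1} (Y_branch A c h d Fs x))"
proof -
  define k where "k = d * A - (1 - c) * Fs"
  define K where "K = d * h * (Fs + x)"
  define M where "M = (1 - c) * (Fs + x)"
  define s where "s w = K * w\<^sup>2 + 2 * k * w + M" for w
  have K: "0 < K"
    using h d Fx by (simp add: K_def)
  have KM: "K < M"
    using A1 Fx unfolding K_def M_def by (intro mult_strict_right_mono) (auto simp: algebra_simps)
  have der: "(Y_branch A c h d Fs x has_real_derivative s z / ((1 - c - z\<^sup>2 * d * h)\<^sup>2 / h)) (at z)"
    if "z \<in> {0..1}" for z
    unfolding s_def k_def K_def M_def
    using steady_denominator_pos[OF A1 d h that] h by (intro Y_branch_deriv) auto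
  have r: "(1 - c - z\<^sup>2 * d * h)\<^sup>2 / h > 0" if "z \<in> {0..1}" for z
    using steady_denominator_pos[OF A1 d h that] h by simp
  show ?thesis
  proof (cases "k < 0 \<and> k\<^sup>2 > K * M")
    case True
    \<comment> \<open>then the vertex \<open>- k / K\<close> of \<open>s\<close> lies beyond \<open>1\<close>\<close>
    have "K \<le> - k"
    proof (rule ccontr)
      assume "\<not> K \<le> - k"
      then have "(- k)\<^sup>2 < K\<^sup>2"
        using True by (intro power_strict_mono) auto
      with True have "K * M < K * K"
        by (simp add: power2_eq_square)
      with K KM show False
        by simp
    qed
    have s_anti: "strict_antimono_on {0..1} s"
    proof (rule monotone_onI)
      fix u v :: real assume uv: "u \<in> {0..1}" "v \<in> {0..1}" "u < v"
      have "K * (u + v) < K * 2"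
        using uv K by (intro mult_strict_left_mono) auto
      moreover have "s v - s u = (v - u) * (K * (u + v) + 2 * k)"
        by (simp add: s_def algebra_simps power2_eq_square)
      ultimately have "s v - s u < 0"
        using uv \<open>K \<le> - k\<close> by (simp add: mult_pos_neg)
      then show "s u > s v"
        by simp
    qed
    have "continuous_on {0..1} s"
      by (auto simp: s_def intro!: continuous_intros)
    moreover have "s 0 > 0"
      using K KM by (simp add: s_def)
    ultimately show ?thesis
      using mono_or_hump_if_deriv_sign_strict_antimono[OF zero_le_one der r _ s_anti] by auto
  next
    case False
    have s_pos: "s z > 0" if "z \<in> {0..1}" "z \<noteq> - k / K" for z
    proof (cases "k \<ge> 0")
      case True
      then show ?thesis using that K KM by (simp add: s_def add_nonneg_pos)
    next
      case k: False
      have "K * z + k \<noteq> 0"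
        using that K by (auto simp: field_simps)
      then have "(K * z + k)\<^sup>2 > 0"
        by simp
      moreover have "K * M - k\<^sup>2 \<ge> 0"
        using False k by simp
      moreover have "K * s z = (K * z + k)\<^sup>2 + (K * M - k\<^sup>2)"
        by (simp add: s_def algebra_simps power2_eq_square)
      ultimately have "K * s z > 0"
        by linarith
      then show ?thesis using K by (simp add: zero_less_mult_iff)
    qed
    have "s z / ((1 - c - z\<^sup>2 * d * h)\<^sup>2 / h) > 0" if "z \<in> {0..1}" "z \<noteq> - k / K" for z
      using s_pos[OF that] r[OF that(1)] by (rule divide_pos_pos)
    then have "strict_mono_on {0..1} (Y_branch A c h d Fs x)"
      by (intro strict_mono_on_if_deriv_pos_except[OF _ der, where t="- k / K"]) auto
    then show ?thesis ..
  qed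
qed

lemma valley_shape_on_open_interval:
  fixes f g :: "real \<Rightarrow> real"
  assumes shape: "strict_mono_on {0..1} g \<or> strict_antimono_on {0..1} g \<or>
      (\<exists>w\<in>{0<..<1}. strict_antimono_on {0..<w} g \<and> strict_mono_on {w<..1} g)"
    and eq: "\<And>x. x \<in> {0<..<1} \<Longrightarrow> f x = g x"
  shows "strict_mono_on {0<..<1} f \<or> strict_antimono_on {0<..<1} f \<or>
      (\<exists>w\<in>{0<..<1}. strict_antimono_on {0<..<w} f \<and> strict_mono_on {w<..<1} f)"
  using shape
proof (elim disjE bexE conjE)
  assume "strict_mono_on {0..1} g"
  then have "strict_mono_on {0<..<1} f"
    by (rule monotone_on_eq_on_subset) (auto simp: eq)
  then show ?thesis ..
next
  assume "strict_antimono_on {0..1} g"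
  then have "strict_antimono_on {0<..<1} f"
    by (rule monotone_on_eq_on_subset) (auto simp: eq)
  then show ?thesis by blast
next
  fix w :: real
  assume w: "w \<in> {0<..<1}" and anti: "strict_antimono_on {0..<w} g" and mono: "strict_mono_on {w<..1} g"
  have "strict_antimono_on {0<..<w} f"
    using anti by (rule monotone_on_eq_on_subset) (use w in \<open>auto simp: eq\<close>)
  moreover have "strict_mono_on {w<..<1} f"
    using mono by (rule monotone_on_eq_on_subset) (use w in \<open>auto simp: eq\<close>)
  ultimately show ?thesis
    using w by blast
qed

lemma hump_shape_on_open_interval:
  fixes f g :: "real \<Rightarrow> real"
  assumes shape: "strict_mono_on {0..1} g \<or>
      (\<exists>w\<in>{0<..<1}. strict_mono_on {0..<w} g \<and> strict_antimono_on {w<..1} g)"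
    and eq: "\<And>x. x \<in> {0<..<1} \<Longrightarrow> f x = g x"
  shows "strict_mono_on {0<..<1} f \<or>
      (\<exists>w\<in>{0<..<1}. strict_mono_on {0<..<w} f \<and> strict_antimono_on {w<..<1} f)"
  using shape
proof (elim disjE bexE conjE)
  assume "strict_mono_on {0..1} g"
  then have "strict_mono_on {0<..<1} f"
    by (rule monotone_on_eq_on_subset) (auto simp: eq)
  then show ?thesis ..
next
  fix w :: real
  assume w: "w \<in> {0<..<1}" and mono: "strict_mono_on {0..<w} g" and anti: "strict_antimono_on {w<..1} g"
  have "strict_mono_on {0<..<w} f"
    using mono by (rule monotone_on_eq_on_subset) (use w in \<open>auto simp: eq\<close>)
  moreover have "strict_antimono_on {w<..<1} f"
    using anti by (rule monotone_on_eq_on_subset) (use w in \<open>auto simp: eq\<close>)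
  ultimately show ?thesis
    using w by blast
qed

lemma two_alpha_fn_minus_one:
  "2 * alpha_fn b \<beta> w Fs d Y P - 1 = tanh (2 * b * \<beta> * (P - (1 - w) * Fs - w * d * Y))"
proof -
  define t where "t = 2 * b * \<beta> * (P - (1 - w) * Fs - w * d * Y)"
  have "exp (- 4 * b * \<beta> * (P - (1 - w) * Fs - w * d * Y)) = exp (- 2 * t)"
    by (simp add: t_def algebra_simps)
  moreover have "1 + exp (- 2 * t) > 0"
    by (simp add: add_pos_pos)
  ultimately show ?thesis
    unfolding alpha_fn_def tanh_real_altdef t_def[symmetric] by (simp add: field_simps)
qed

text \<open>Since \<open>g\<^sub>P\<close> vanishes only at \<open>0\<close>, and \<open>2 \<alpha> - 1\<close> is a \<open>tanh\<close>, the \<open>P\<close>-equation says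
that the deviation is a fixed point of \<open>b tanh (2 b \<beta> \<cdot>)\<close>.\<close>

lemma G_map_fixed_point_eqs:
  assumes gI: "admissible_g gI" and gP: "admissible_g gP" and "\<sigma> \<noteq> 0" "\<mu> \<noteq> 0"
    and fp: "G_map gI gP A c \<gamma> w h d \<sigma> \<mu> Fs b \<beta> (Y, P, Y) = (Y, P, Y)"
    and x: "x = P - (1 - w) * Fs - w * d * Y"
  shows "(1 - c) * Y = A + w * h * P" and "x = b * tanh (2 * b * \<beta> * x)"
proof -
  have "gI 0 = 0" "gP 0 = 0" "inj gP"
    using gI gP by (auto simp: admissible_g_def strict_mono_imp_inj_on)
  moreover have "A + c * Y + \<gamma> * gI (Y - Y) + w * h * P = Y"
    and "gP (\<mu> * ((1 - w) * Fs + w * d * Y - P + b * (2 * alpha_fn b \<beta> w Fs d Y P - 1))) = 0"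
    using fp \<open>\<sigma> \<noteq> 0\<close> by (auto simp: G_map_def)
  ultimately have "A + c * Y + w * h * P = Y"
    and "(1 - w) * Fs + w * d * Y - P + b * (2 * alpha_fn b \<beta> w Fs d Y P - 1) = 0"
    using \<open>\<mu> \<noteq> 0\<close> by (auto dest: injD[of gP _ 0])
  then show "(1 - c) * Y = A + w * h * P" and "x = b * tanh (2 * b * \<beta> * x)"
    unfolding two_alpha_fn_minus_one x by (simp_all add: algebra_simps)
qed

lemma steady_state_eq_branch:
  assumes c: "c \<noteq> 1" and D: "1 - c - w\<^sup>2 * d * h \<noteq> 0"
    and Y: "(1 - c) * Y = A + w * h * P" and x: "x = P - (1 - w) * Fs - w * d * Y"
  shows "P = P_branch A c h d Fs x w" and "Y = Y_branch A c h d Fs x w"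
proof -
  have PD: "P * (1 - c - w\<^sup>2 * d * h) = (1 - w) * (1 - c) * Fs + w * d * A + (1 - c) * x"
  proof -
    have "(1 - c) * x = (1 - c) * P - (1 - w) * (1 - c) * Fs - w * d * ((1 - c) * Y)"
      by (simp add: x algebra_simps)
    then show ?thesis
      unfolding Y by (simp add: algebra_simps power2_eq_square)
  qed
  then show "P = P_branch A c h d Fs x w"
    using D by (simp add: P_branch_def field_simps)
  have "(1 - c) * (Y * (1 - c - w\<^sup>2 * d * h)) = (A + w * h * P) * (1 - c - w\<^sup>2 * d * h)"
    unfolding Y[symmetric] by (simp only: mult.assoc)
  also have "\<dots> = A * (1 - c - w\<^sup>2 * d * h) + w * h * (P * (1 - c - w\<^sup>2 * d * h))"
    by (simp add: algebra_simps)
  also have "\<dots> = (1 - c) * (A + h * w * (Fs + x) - h * Fs * w\<^sup>2)"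
    unfolding PD by (simp add: algebra_simps power2_eq_square)
  finally have "Y * (1 - c - w\<^sup>2 * d * h) = A + h * w * (Fs + x) - h * Fs * w\<^sup>2"
    using c by simp
  then show "Y = Y_branch A c h d Fs x w"
    using D by (simp add: Y_branch_def field_simps)
qed

lemma tanh_fixed_point_abs_less:
  fixes b k x :: real
  assumes "b > 0" and "x = b * tanh (k * x)"
  shows "\<bar>x\<bar> < b"
proof -
  have "\<bar>tanh (k * x)\<bar> < 1"
    using tanh_real_lt_1 tanh_real_gt_neg1 by (simp add: abs_less_iff)
  with assms show ?thesis
    by (metis abs_mult abs_of_pos mult.right_neutral mult_strict_left_mono)
qed

text \<open>Between two positive fixed points, the mean value theorem gives two zeros of the derivative
\<open>b k (1 - tanh\<^sup>2 (k t)) - 1\<close> of \<open>b tanh (k t) - t\<close>, which is strictly decreasing for \<open>t > 0\<close>.\<close>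

lemma tanh_fixed_points_pos_not_less:
  fixes b k x y :: real
  assumes b: "b > 0" and k: "k > 0" and xy: "0 < x" "x < y"
    and fx: "x = b * tanh (k * x)" and fy: "y = b * tanh (k * y)"
  shows False
proof -
  define G where "G t = b * tanh (k * t) - t" for t
  define G' where "G' t = b * (k * (1 - tanh (k * t) ^ 2)) - 1" for t
  have der: "(G has_real_derivative G' t) (at t)" for t
    unfolding G_def G'_def
    by (auto intro!: derivative_eq_intros simp: cosh_real_pos[THEN less_imp_neq, symmetric])
  have G0: "G 0 = 0" "G x = 0" "G y = 0"
    using fx fy by (auto simp: G_def)
  obtain u where u: "0 < u" "u < x" "G x - G 0 = (x - 0) * G' u"
    using MVT2[of 0 x G G'] xy der by blast
  obtain v where v: "x < v" "v < y" "G y - G x = (y - x) * G' v"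
    using MVT2[of x y G G'] xy der by blast
  have "G' u = G' v"
    using u v G0 xy by simp
  then have "tanh (k * u) ^ 2 = tanh (k * v) ^ 2"
    using b k by (simp add: G'_def)
  moreover have "0 < tanh (k * u)" "tanh (k * u) < tanh (k * v)"
    using k u v by simp_all
  ultimately show False
    by (metis order.strict_iff_not power_strict_mono zero_less_numeral)
qed

lemma tanh_fixed_point_unique:
  fixes b k x y :: real
  assumes b: "b > 0" and k: "k > 0"
    and fx: "x = b * tanh (k * x)" and fy: "y = b * tanh (k * y)" and sgn: "sgn x = sgn y"
  shows "x = y"
proof -
  have "\<bar>x\<bar> = b * tanh (k * \<bar>x\<bar>)" "\<bar>y\<bar> = b * tanh (k * \<bar>y\<bar>)"
    using fx fy b k by (metis abs_mult abs_of_pos tanh_real_abs)+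
  moreover have "x = 0 \<longleftrightarrow> y = 0"
    using sgn by (metis sgn_eq_0_iff)
  ultimately have "\<bar>x\<bar> = \<bar>y\<bar>"
    using tanh_fixed_points_pos_not_less[OF b k, of "\<bar>x\<bar>" "\<bar>y\<bar>"]
      tanh_fixed_points_pos_not_less[OF b k, of "\<bar>y\<bar>" "\<bar>x\<bar>"]
    by (cases "\<bar>x\<bar>" "\<bar>y\<bar>" rule: linorder_cases) auto
  with sgn show ?thesis
    by (metis sgn_mult_abs)
qed

lemma steady_branch_eq:
  fixes Yj Pj :: "real \<Rightarrow> real"
  assumes gI: "admissible_g gI" and gP: "admissible_g gP" and "\<sigma> \<noteq> 0" "\<mu> \<noteq> 0"
    and b: "b > 0" and \<beta>: "\<beta> > 0" and h: "h > 0" and d: "d > 0" and A1: "1 - c - h * d > 0"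
    and fp: "\<And>w. w \<in> {0<..<1} \<Longrightarrow>
      G_map gI gP A c \<gamma> w h d \<sigma> \<mu> Fs b \<beta> (Yj w, Pj w, Yj w) = (Yj w, Pj w, Yj w)"
    and side: "\<And>w. w \<in> {0<..<1} \<Longrightarrow> sgn (Pj w - Pstar A c h d Fs w) = \<epsilon>"
  obtains x where "x = b * tanh (2 * b * \<beta> * x)"
    and "\<And>w. w \<in> {0<..<1} \<Longrightarrow> Pj w = P_branch A c h d Fs x w \<and> Yj w = Y_branch A c h d Fs x w"
proof -
  define dev where "dev w = Pj w - (1 - w) * Fs - w * d * Yj w" for w
  have c: "1 - c > 0"
    using A1 mult_pos_pos[OF h d] by linarith
  have dev: "dev w = b * tanh (2 * b * \<beta> * dev w) \<and> sgn (dev w) = \<epsilon> \<and>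
      Pj w = P_branch A c h d Fs (dev w) w \<and> Yj w = Y_branch A c h d Fs (dev w) w"
    if w: "w \<in> {0<..<1}" for w
  proof -
    have D: "1 - c - w\<^sup>2 * d * h > 0"
      using steady_denominator_pos[OF A1 d h] w by simp
    note eqs = G_map_fixed_point_eqs[OF gI gP \<open>\<sigma> \<noteq> 0\<close> \<open>\<mu> \<noteq> 0\<close> fp[OF w] dev_def]
    have "c \<noteq> 1" "1 - c - w\<^sup>2 * d * h \<noteq> 0"
      using c D by simp_all
    note branch = steady_state_eq_branch[OF this eqs(1) dev_def]
    have "sgn (Pj w - Pstar A c h d Fs w) = sgn (dev w)"
      unfolding branch(1) P_branch_minus_Pstar using c D by (simp add: sgn_mult)
    then show ?thesis
      using eqs(2) branch side[OF w] by simp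
  qed
  define x where "x = dev (1 / 2)"
  have half: "1 / 2 \<in> {0<..<1::real}"
    by simp
  have dev_eq: "dev w = x" if w: "w \<in> {0<..<1}" for w
  proof (rule tanh_fixed_point_unique[of b "2 * b * \<beta>"])
    show "0 < b" "0 < 2 * b * \<beta>"
      using b \<beta> by simp_all
    show "dev w = b * tanh (2 * b * \<beta> * dev w)" "x = b * tanh (2 * b * \<beta> * x)"
      "sgn (dev w) = sgn x"
      using dev[OF w] dev[OF half] by (simp_all add: x_def)
  qed
  show thesis
  proof (rule that)
    show "x = b * tanh (2 * b * \<beta> * x)"
      using dev[OF half] by (simp add: x_def)
    show "Pj w = P_branch A c h d Fs x w \<and> Yj w = Y_branch A c h d Fs x w" if "w \<in> {0<..<1}" for w
      using dev[OF that] dev_eq[OF that] by simp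
  qed
qed

lemma steady_branch_shape:
  fixes Yj Pj :: "real \<Rightarrow> real"
  assumes gI: "admissible_g gI" and gP: "admissible_g gP" and "\<sigma> \<noteq> 0" "\<mu> \<noteq> 0"
    and b: "b > 0" and \<beta>: "\<beta> > 0" and h: "h > 0" and d: "d > 0" and A1: "1 - c - h * d > 0"
    and bF: "b < Fs" and bA: "(1 - c) * b < d * A"
    and fp: "\<And>w. w \<in> {0<..<1} \<Longrightarrow>
      G_map gI gP A c \<gamma> w h d \<sigma> \<mu> Fs b \<beta> (Yj w, Pj w, Yj w) = (Yj w, Pj w, Yj w)"
    and side: "\<And>w. w \<in> {0<..<1} \<Longrightarrow> sgn (Pj w - Pstar A c h d Fs w) = \<epsilon>"
  shows "(strict_mono_on {0<..<1} Pj \<or> strict_antimono_on {0<..<1} Pj \<or>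
          (\<exists>w\<in>{0<..<1}. strict_antimono_on {0<..<w} Pj \<and> strict_mono_on {w<..<1} Pj)) \<and>
         (strict_mono_on {0<..<1} Yj \<or>
          (\<exists>w\<in>{0<..<1}. strict_mono_on {0<..<w} Yj \<and> strict_antimono_on {w<..<1} Yj))"
proof -
  obtain x where x: "x = b * tanh (2 * b * \<beta> * x)"
    and eq: "\<And>w. w \<in> {0<..<1} \<Longrightarrow> Pj w = P_branch A c h d Fs x w \<and> Yj w = Y_branch A c h d Fs x w"
    using steady_branch_eq[OF assms(1-9) fp side] by blast
  have "\<bar>x\<bar> < b"
    using tanh_fixed_point_abs_less[OF b x] .
  have c: "1 - c > 0"
    using A1 mult_pos_pos[OF h d] by linarith
  have Fx: "Fs + x > 0"
    using \<open>\<bar>x\<bar> < b\<close> bF by linarith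
  have "(1 - c) * - x < (1 - c) * b"
    using \<open>\<bar>x\<bar> < b\<close> c by (intro mult_strict_left_mono) auto
  then have Ax: "d * A + (1 - c) * x > 0"
    using bA by linarith
  show ?thesis
    using valley_shape_on_open_interval[OF P_branch_shape[OF h d A1 Fx Ax]]
      hump_shape_on_open_interval[OF Y_branch_shape[OF h d A1 Fx]] eq
    by blast
qed

lemma steady_branches_shape:
  fixes YL PL YH PH :: "real \<Rightarrow> real"
  assumes gI: "admissible_g gI" and gP: "admissible_g gP" and "\<sigma> \<noteq> 0" "\<mu> \<noteq> 0"
    and b: "b > 0" and \<beta>: "\<beta> > 0" and h: "h > 0" and d: "d > 0" and A1: "1 - c - h * d > 0"
    and bF: "b < Fs" and bA: "(1 - c) * b < d * A"
    and branches: "\<forall>\<omega>\<in>{0<..<1}.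
        G_map gI gP A c \<gamma> \<omega> h d \<sigma> \<mu> Fs b \<beta> (YL \<omega>, PL \<omega>, YL \<omega>) = (YL \<omega>, PL \<omega>, YL \<omega>)
      \<and> PL \<omega> < Pstar A c h d Fs \<omega>
      \<and> G_map gI gP A c \<gamma> \<omega> h d \<sigma> \<mu> Fs b \<beta> (YH \<omega>, PH \<omega>, YH \<omega>) = (YH \<omega>, PH \<omega>, YH \<omega>)
      \<and> Pstar A c h d Fs \<omega> < PH \<omega>"
  shows "\<forall>(Yj, Pj) \<in> {(YL, PL), (YH, PH)}.
      (strict_mono_on {0<..<1} Pj \<or> strict_antimono_on {0<..<1} Pj \<or>
       (\<exists>w\<in>{0<..<1}. strict_antimono_on {0<..<w} Pj \<and> strict_mono_on {w<..<1} Pj))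
    \<and> (strict_mono_on {0<..<1} Yj \<or>
       (\<exists>w\<in>{0<..<1}. strict_mono_on {0<..<w} Yj \<and> strict_antimono_on {w<..<1} Yj))"
proof -
  note branch_shape = steady_branch_shape[OF assms(1-11)]
  have L: "G_map gI gP A c \<gamma> w h d \<sigma> \<mu> Fs b \<beta> (YL w, PL w, YL w) = (YL w, PL w, YL w)"
      "sgn (PL w - Pstar A c h d Fs w) = - 1"
    and H: "G_map gI gP A c \<gamma> w h d \<sigma> \<mu> Fs b \<beta> (YH w, PH w, YH w) = (YH w, PH w, YH w)"
      "sgn (PH w - Pstar A c h d Fs w) = 1"
    if "w \<in> {0<..<1}" for w
    using branches that by auto
  show ?thesis
    using branch_shape[where Yj=YL and Pj=PL, OF L] branch_shape[where Yj=YH and Pj=PH, OF H]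
    by auto
qed

theorem proposition3:
  fixes gI gP :: "real \<Rightarrow> real"
    and A c \<gamma> h d \<sigma> \<mu> Fs b \<beta> :: real
  assumes gI: "admissible_g gI" and gP: "admissible_g gP"
    and A: "A > 0" and c: "0 < c" "c < 1" and \<gamma>: "\<gamma> > 0" and h: "h > 0" and d: "d > 0"
    and \<sigma>: "\<sigma> > 0" and \<mu>: "\<mu> > 0" and Fs: "Fs > 0" and b: "b > 0" and \<beta>: "\<beta> > 0"
    and A1: "1 - c - h * d > 0"
  shows
    "(strict_mono_on {0..1} (Pstar A c h d Fs) \<or>
      strict_antimono_on {0..1} (Pstar A c h d Fs) \<or>
      (\<exists>w\<in>{0<..<1}. strict_antimono_on {0..<w} (Pstar A c h d Fs) \<and>
                     strict_mono_on {w<..1} (Pstar A c h d Fs)))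
   \<and> (strict_mono_on {0..1} (Ystar A c h d Fs) \<or>
      (\<exists>w\<in>{0<..<1}. strict_mono_on {0..<w} (Ystar A c h d Fs) \<and>
                     strict_antimono_on {w<..1} (Ystar A c h d Fs)))
   \<and> (\<forall>YL PL YH PH :: real \<Rightarrow> real.
        1 / sqrt (2 * \<beta>) < b \<and> b < min (d * A / (1 - c)) Fs
        \<and> (\<forall>\<omega>\<in>{0<..<1}.
              G_map gI gP A c \<gamma> \<omega> h d \<sigma> \<mu> Fs b \<beta> (YL \<omega>, PL \<omega>, YL \<omega>) = (YL \<omega>, PL \<omega>, YL \<omega>)
            \<and> PL \<omega> < Pstar A c h d Fs \<omega>
            \<and> G_map gI gP A c \<gamma> \<omega> h d \<sigma> \<mu> Fs b \<beta> (YH \<omega>, PH \<omega>, YH \<omega>) = (YH \<omega>, PH \<omega>, YH \<omega>)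
            \<and> Pstar A c h d Fs \<omega> < PH \<omega>
            \<and> PL \<omega> \<noteq> Pstar A c h d Fs \<omega>
                 - (1 - c) / (1 - c - \<omega>\<^sup>2 * d * h) * sqrt (b\<^sup>2 - 1 / (2 * \<beta>)))
        \<longrightarrow> (\<forall>(Yj, Pj) \<in> {(YL, PL), (YH, PH)}.
              (strict_mono_on {0<..<1} Pj \<or> strict_antimono_on {0<..<1} Pj \<or>
               (\<exists>w\<in>{0<..<1}. strict_antimono_on {0<..<w} Pj \<and> strict_mono_on {w<..<1} Pj))
            \<and> (strict_mono_on {0<..<1} Yj \<or>
               (\<exists>w\<in>{0<..<1}. strict_mono_on {0<..<w} Yj \<and> strict_antimono_on {w<..<1} Yj))))"
proof -
  have "Fs + 0 > 0" "d * A + (1 - c) * 0 > 0"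
    using Fs A d by simp_all
  note star_shapes = P_branch_shape[OF h d A1 this] Y_branch_shape[OF h d A1 this(1)]
  have b_bounds: "b < Fs" "(1 - c) * b < d * A" if "b < min (d * A / (1 - c)) Fs"
    using that c by (auto simp: field_simps)
  \<comment> \<open>Existence of the branches is part of the hypothesis, so neither \<open>1 / sqrt (2 \<beta>) < b\<close>
    nor the condition excluding the double root of the \<open>P\<^sup>L\<close>-equation is needed.\<close>
  have "\<sigma> \<noteq> 0" "\<mu> \<noteq> 0"
    using \<sigma> \<mu> by simp_all
  note branches_shape = steady_branches_shape[OF gI gP this b \<beta> h d A1 b_bounds]
  show ?thesis
    using star_shapes[folded Pstar_eq_P_branch Ystar_eq_Y_branch] branches_shape by blast
qed

end
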